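(* Let $\mathbf{S}=(S_n)_{n\in\mathbb{N}}$ be a stationary information source with finite (totally ordered) alphabet $A$ and sequence-space model $(A^{\mathbb{N}},\mathcal{Z},m,\sigma)$, and let $\{m_s:s\in A^{\mathbb{N}}\}$ be the ergodic decomposition of $m$. Assume that $s\mapsto h_{m_s}(\mathbf{S})$ is $m$-integrable. Then \[ \liminf_{L\to\infty}\frac{1}{L-1}H_m(R_1^L)\ \ge\ h_m(\mathbf{S}). \]
   Context: $m$ is the shift-invariant probability measure on $A^{\mathbb{N}}$ induced by the process, $\mathcal{Z}$ the product $\sigma$-algebra and $\sigma$ the left shift. The ergodic decomposition is a family of $\sigma$-invariant ergodic probability measures $m_s$ with $m_{\sigma(s)}=m_s$ and $m(C)=\int_{A^{\mathbb{N}}}m_s(C)\,dm(s)$ for all $C\in\mathcal{Z}$. For a shift-invariant measure $\nu$, $h_\nu(\mathbf{S})=\lim_{L\to\infty}\frac1L H_\nu(S_1^L)$ is the metric (Shannon) entropy rate, where $H_\nu$ is Shannon entropy (base 2) of the distribution of the word $S_1^L=S_1\cdots S_L$ under $\nu$. Rank variables: $R_n=\sum_{i=1}^n\delta(S_i\le S_n)$, with $\delta(P)=1$ if $P$ holds and $0$ otherwise, and $R_1^L=R_1\cdots R_L$. *)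

theory Defs
  imports "HOL-Probability.Probability"
begin

text \<open>Sequence space A^N over a finite totally ordered alphabet 'a, realised as
  functions nat => 'a; coordinate n (0-based) is the symbol S_(n+1).\<close>

definition seq_space :: "(nat \<Rightarrow> 'a) measure" where
  "seq_space = Pi\<^sub>M UNIV (\<lambda>_. count_space UNIV)"

definition Z :: "(nat \<Rightarrow> 'a) set set" where
  "Z = sets seq_space"

definition shift :: "(nat \<Rightarrow> 'a) \<Rightarrow> (nat \<Rightarrow> 'a)" where
  "shift x = (\<lambda>n. x (Suc n))"

definition shift_invariant_prob :: "(nat \<Rightarrow> 'a) measure \<Rightarrow> bool" where
  "shift_invariant_prob \<nu> \<longleftrightarrow> prob_space \<nu> \<and> sets \<nu> = Z \<and>
     (\<forall>C\<in>Z. emeasure \<nu> (shift -` C) = emeasure \<nu> C)"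

definition ergodic_prob :: "(nat \<Rightarrow> 'a) measure \<Rightarrow> bool" where
  "ergodic_prob \<nu> \<longleftrightarrow> shift_invariant_prob \<nu> \<and>
     (\<forall>C\<in>Z. shift -` C = C \<longrightarrow> measure \<nu> C = 0 \<or> measure \<nu> C = 1)"

text \<open>Shannon entropy (base 2) of the distribution of a finitely-valued random variable X
  under \<nu>; convention 0 log 0 = 0 (automatic, since log 2 0 = 0 in Isabelle).\<close>
definition shannon_entropy :: "'b measure \<Rightarrow> ('b \<Rightarrow> 'c) \<Rightarrow> real" where
  "shannon_entropy \<nu> X =
     - (\<Sum>v\<in>X ` space \<nu>. measure \<nu> (X -` {v} \<inter> space \<nu>) *
                              log 2 (measure \<nu> (X -` {v} \<inter> space \<nu>)))"

definition block :: "nat \<Rightarrow> (nat \<Rightarrow> 'a) \<Rightarrow> 'a list" where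
  "block L x = map x [0..<L]"

definition rank_var :: "nat \<Rightarrow> (nat \<Rightarrow> 'a::linorder) \<Rightarrow> nat" where
  "rank_var n x = card {i\<in>{1..n}. x (i - 1) \<le> x (n - 1)}"

definition rank_block :: "nat \<Rightarrow> (nat \<Rightarrow> 'a::linorder) \<Rightarrow> nat list" where
  "rank_block L x = map (\<lambda>n. rank_var n x) [1..<Suc L]"

definition entropy_rate :: "(nat \<Rightarrow> 'a) measure \<Rightarrow> real" where
  "entropy_rate \<nu> = lim (\<lambda>L. shannon_entropy \<nu> (block L) / real L)"

end

theory Submission
  imports Defs "HOL-Real_Asymp.Real_Asymp"
begin

text \<open>The word \<open>S\<^sub>1\<^sup>L\<close> is determined by the rank word \<open>R\<^sub>1\<^sup>L\<close> together with the cumulative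
  symbol counts \<open>a \<mapsto> #{i < L. S\<^sub>i\<^sub>+\<^sub>1 \<le> a}\<close>: the rank of the last symbol is the count at that
  symbol, and counts at different symbols differ, so the last symbol can be read off and the
  argument repeats on the shorter prefix. There are at most \<open>(L + 1)\<^bsup>|A|\<^esup>\<close> count vectors, hence
  \<open>H(S\<^sub>1\<^sup>L) \<le> H(R\<^sub>1\<^sup>L) + |A| log (L + 1)\<close>. Dividing by \<open>L - 1\<close> and using that \<open>H(S\<^sub>1\<^sup>L)/L\<close> converges
  to \<open>h\<^sub>m\<close> (Fekete's lemma, by stationarity) gives the claim. The bound holds for every
  stationary source.\<close>

lemma space_seq_space: "space (seq_space :: (nat \<Rightarrow> 'a) measure) = UNIV"
  unfolding seq_space_def by (simp add: space_PiM)

lemma space_eq_UNIV_if_sets_Z: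
  assumes "sets M = Z"
  shows "space M = UNIV"
  using sets_eq_imp_space_eq[of M seq_space] assms space_seq_space unfolding Z_def by simp

lemma cylinder_in_Z: "{x::nat \<Rightarrow> 'a. \<forall>i<N. x i = c i} \<in> Z"
proof -
  have "{x \<in> space seq_space. \<forall>i<N. x i = c i} \<in> sets seq_space"
    unfolding seq_space_def by measurable
  then show ?thesis by (simp add: space_seq_space Z_def)
qed

lemma measurable_shift: "shift \<in> measurable seq_space seq_space"
  unfolding seq_space_def shift_def by (rule measurable_PiM_single') measurable

lemma funpow_shift: "(shift ^^ k) x = (\<lambda>n. x (n + k))"
  by (induction k arbitrary: x) (simp_all add: shift_def funpow_Suc_right)

lemma surj_funpow_shift: "surj (shift ^^ k)"
proof (rule surjI)
  show "(shift ^^ k) (\<lambda>n. x (n - k)) = x" for x :: "nat \<Rightarrow> 'a"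
    by (simp add: funpow_shift)
qed

lemma vimage_funpow_shift_in_Z:
  assumes "C \<in> Z"
  shows "(shift ^^ k) -` C \<in> Z"
proof -
  have "(shift ^^ k) \<in> measurable seq_space seq_space"
  proof (induction k)
    case (Suc k)
    show ?case
      unfolding funpow_Suc_right by (rule measurable_comp[OF measurable_shift Suc.IH])
  qed simp
  from measurable_sets[OF this] assms show ?thesis
    by (simp add: Z_def space_seq_space)
qed

lemma measure_vimage_funpow_shift:
  assumes "shift_invariant_prob m" and "C \<in> Z"
  shows "measure m ((shift ^^ k) -` C) = measure m C"
proof (induction k)
  case (Suc k)
  have "measure m ((shift ^^ Suc k) -` C) = measure m (shift -` ((shift ^^ k) -` C))"
    by (simp only: funpow_Suc_right vimage_comp)
  also have "\<dots> = measure m ((shift ^^ k) -` C)"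
    using assms vimage_funpow_shift_in_Z[OF assms(2)]
    unfolding shift_invariant_prob_def measure_def by auto
  also have "\<dots> = measure m C" by (rule Suc.IH)
  finally show ?case .
qed simp

lemma nth_block: "i < N \<Longrightarrow> block N x ! i = x i"
  by (simp add: block_def)

lemma length_block [simp]: "length (block N x) = N"
  by (simp add: block_def)

lemma block_cong: "(\<And>i. i < N \<Longrightarrow> x i = y i) \<Longrightarrow> block N x = block N y"
  by (simp add: block_def)

lemma block_add: "block (L + M) x = block L x @ block M ((shift ^^ L) x)"
  by (rule nth_equalityI) (auto simp: nth_block nth_append funpow_shift add.commute)

lemma vimage_block_singleton:
  "block N -` {w} = (if length w = N then {x. \<forall>i<N. x i = w ! i} else {})"
  by (auto simp: nth_block intro!: nth_equalityI) (metis nth_block)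

lemma simple_function_block:
  fixes M :: "(nat \<Rightarrow> 'a::finite) measure"
  assumes "sets M = Z"
  shows "simple_function M (block N)"
  unfolding simple_function_def
proof
  have "block N ` space M \<subseteq> {w. length w = N}" by auto
  then show "finite (block N ` space M)"
    using finite_lists_length_eq[of "UNIV :: 'a set" N] by (simp add: finite_subset)
  show "\<forall>w\<in>block N ` space M. block N -` {w} \<inter> space M \<in> sets M"
    using assms
    by (auto simp: space_eq_UNIV_if_sets_Z vimage_block_singleton intro: cylinder_in_Z)
qed

lemma simple_function_if_prefix_determined:
  fixes f :: "(nat \<Rightarrow> 'a::finite) \<Rightarrow> 'b"
  assumes "sets M = Z" and "\<And>x y. (\<And>i. i < N \<Longrightarrow> x i = y i) \<Longrightarrow> f x = f y"
  shows "simple_function M f"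
proof -
  have "f = (\<lambda>w. f (\<lambda>i. w ! i)) \<circ> block N"
    by (rule ext) (auto simp: nth_block intro: assms(2))
  then show ?thesis
    using simple_function_compose[OF simple_function_block[OF assms(1)]] by metis
qed

subsection \<open>Shannon entropy\<close>

lemma shannon_entropy_eq_entropy:
  assumes "prob_space M" and "simple_function M X"
  shows "shannon_entropy M X = prob_space.entropy M 2 (count_space (X ` space M)) X"
proof -
  interpret information_space M 2 using assms(1)
    by (simp add: information_space_def information_space_axioms_def)
  show ?thesis unfolding shannon_entropy_def
    by (subst entropy_simple_distributed[OF simple_distributedI[OF assms(2) measure_nonneg refl]])
      simp
qed

lemma shannon_entropy_nonneg:
  assumes "prob_space M"
  shows "0 \<le> shannon_entropy M X"
proof -
  interpret prob_space M by fact
  have "measure M A * log 2 (measure M A) \<le> 0" for A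
  proof (cases "measure M A = 0")
    case False
    then have "0 < measure M A" using measure_nonneg[of M A] by linarith
    with prob_le_1[of A] show ?thesis by (simp add: mult_nonneg_nonpos)
  qed simp
  then show ?thesis unfolding shannon_entropy_def by (simp add: sum_nonpos)
qed

lemma shannon_entropy_pair_le:
  assumes "prob_space M" and X: "simple_function M X" and Y: "simple_function M Y"
  shows "shannon_entropy M (\<lambda>x. (X x, Y x)) \<le> shannon_entropy M X + shannon_entropy M Y"
proof -
  interpret information_space M 2 using assms(1)
    by (simp add: information_space_def information_space_axioms_def)
  show ?thesis
    using entropy_chain_rule[OF X Y] conditional_entropy_less_eq_entropy[OF Y X]
      shannon_entropy_eq_entropy[OF assms(1) X] shannon_entropy_eq_entropy[OF assms(1) Y]
      shannon_entropy_eq_entropy[OF assms(1) simple_function_Pair[OF X Y]]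
    by linarith
qed

lemma shannon_entropy_comp_le:
  assumes "prob_space M" and X: "simple_function M X"
  shows "shannon_entropy M (f \<circ> X) \<le> shannon_entropy M X"
proof -
  interpret information_space M 2 using assms(1)
    by (simp add: information_space_def information_space_axioms_def)
  show ?thesis
    using entropy_data_processing[OF X, of f] shannon_entropy_eq_entropy[OF assms(1) X]
      shannon_entropy_eq_entropy[OF assms(1) simple_function_compose[OF X, of f]]
    by linarith
qed

lemma shannon_entropy_le_log_card:
  assumes "prob_space M" and X: "simple_function M X"
  shows "shannon_entropy M X \<le> log 2 (real (card (X ` space M)))"
proof -
  interpret information_space M 2 using assms(1)
    by (simp add: information_space_def information_space_axioms_def)
  show ?thesis
    using entropy_le_card[OF simple_distributedI[OF X measure_nonneg refl]]
      shannon_entropy_eq_entropy[OF assms(1) X]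
    by simp
qed

lemma shannon_entropy_comp_funpow_shift:
  assumes m: "shift_invariant_prob m" and X: "simple_function m X"
  shows "shannon_entropy m (X \<circ> shift ^^ k) = shannon_entropy m X"
proof -
  have space: "space m = UNIV"
    using m space_eq_UNIV_if_sets_Z unfolding shift_invariant_prob_def by blast
  have "X \<in> measurable m (count_space UNIV)"
    using X by (simp add: simple_function_eq_measurable)
  then have "X -` {v} \<in> Z" for v
    using m measurable_sets[of X m "count_space UNIV" "{v}"]
    unfolding shift_invariant_prob_def by (simp add: space)
  then have "measure m ((X \<circ> shift ^^ k) -` {v}) = measure m (X -` {v})" for v
    by (simp add: vimage_comp[symmetric] measure_vimage_funpow_shift[OF m])
  moreover have "(X \<circ> shift ^^ k) ` UNIV = X ` UNIV"
    by (simp only: image_comp[symmetric] surj_funpow_shift)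
  ultimately show ?thesis unfolding shannon_entropy_def space by simp
qed

lemma subadditive_mult_add_le:
  fixes a :: "nat \<Rightarrow> real"
  assumes "\<And>m n. a (m + n) \<le> a m + a n"
  shows "a (q * k + r) \<le> real q * a k + a r"
proof (induction q)
  case (Suc q)
  have "a (Suc q * k + r) = a (k + (q * k + r))" by (simp add: algebra_simps)
  also have "\<dots> \<le> a k + a (q * k + r)" by (rule assms)
  finally show ?case using Suc.IH by (simp add: algebra_simps)
qed simp

lemma subadditive_convergent_div:
  fixes a :: "nat \<Rightarrow> real"
  assumes nonneg: "\<And>n. 0 \<le> a n" and subadd: "\<And>m n. a (m + n) \<le> a m + a n"
  shows "convergent (\<lambda>n. a n / real n)"
proof -
  define S where "S = (\<lambda>n. a n / real n) ` {1..}"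
  define l where "l = Inf S"
  have "bdd_below S" unfolding S_def using nonneg by (auto intro!: bdd_belowI[of _ 0])
  then have l_le: "l \<le> a n / real n" if "1 \<le> n" for n
    unfolding l_def using that by (intro cInf_lower) (auto simp: S_def)
  have "(\<lambda>n. a n / real n) \<longlonglongrightarrow> l"
  proof (rule LIMSEQ_I)
    fix r :: real assume r: "0 < r"
    have "Inf S < l + r / 2" using r unfolding l_def by simp
    from cInf_lessD[OF _ this] obtain k where k: "1 \<le> k" "a k / real k < l + r / 2"
      unfolding S_def by auto
    define C where "C = Max (a ` {..<k})"
    have C: "a j \<le> C" if "j < k" for j unfolding C_def using that by (intro Max_ge) auto
    have "0 \<le> C" using C[of 0] nonneg[of 0] k by fastforce
    obtain N :: nat where N: "2 * C / r < real N" using reals_Archimedean2 by blast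
    have "norm (a n / real n - l) < r" if n: "max 1 N \<le> n" for n
    proof -
      have "a n = a (n div k * k + n mod k)" by simp
      also have "\<dots> \<le> real (n div k) * a k + a (n mod k)"
        by (rule subadditive_mult_add_le[OF subadd])
      also have "\<dots> \<le> real n / real k * a k + C"
      proof (rule add_mono)
        show "real (n div k) * a k \<le> real n / real k * a k"
          using nonneg[of k] by (intro mult_right_mono of_nat_div_le_of_nat)
        show "a (n mod k) \<le> C" using k by (intro C) simp
      qed
      finally have "a n / real n \<le> (real n / real k * a k + C) / real n"
        using n by (intro divide_right_mono) auto
      also have "\<dots> = a k / real k + C / real n"
        using n by (simp add: field_simps)
      also have "\<dots> < (l + r / 2) + r / 2"
      proof (rule add_less_le_mono)
        show "a k / real k < l + r / 2" by (rule k(2))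
        have "2 * C / r < real n" using N n of_nat_mono[of N n] by linarith
        then show "C / real n \<le> r / 2" using r n by (simp add: field_simps)
      qed
      finally have "a n / real n < l + r" by simp
      moreover have "l \<le> a n / real n" using l_le n by simp
      ultimately show ?thesis by simp
    qed
    then show "\<exists>N. \<forall>n\<ge>N. norm (a n / real n - l) < r" by blast
  qed
  then show ?thesis by (rule convergentI)
qed

lemma liminf_div_pred_ge_if_le_log_plus:
  fixes a b :: "nat \<Rightarrow> real"
  assumes lim: "(\<lambda>L. a L / real L) \<longlonglongrightarrow> h" and le: "\<And>L. a L \<le> b L + c * log 2 (real L + 1)"
  shows "ereal h \<le> liminf (\<lambda>L. ereal (b L / (real L - 1)))"
proof -
  define g where "g L = (a L - c * log 2 (real L + 1)) / (real L - 1)" for L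
  have "(\<lambda>L. real L / (real L - 1)) \<longlonglongrightarrow> 1" by real_asymp
  moreover have "(\<lambda>L. log 2 (real L + 1) / (real L - 1)) \<longlonglongrightarrow> 0" by real_asymp
  ultimately have "(\<lambda>L. a L / real L * (real L / (real L - 1)) - c * (log 2 (real L + 1) / (real L - 1)))
      \<longlonglongrightarrow> h * 1 - c * 0"
    by (intro tendsto_diff tendsto_mult lim tendsto_const)
  moreover have "\<forall>\<^sub>F L in sequentially.
      a L / real L * (real L / (real L - 1)) - c * (log 2 (real L + 1) / (real L - 1)) = g L"
    using eventually_gt_at_top[of 1]
  proof eventually_elim
    case (elim L)
    then have "a L / real L * (real L / (real L - 1)) = a L / (real L - 1)" by simp
    then show ?case by (simp add: g_def diff_divide_distrib)
  qed
  ultimately have "g \<longlonglongrightarrow> h"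
    by (simp add: Lim_transform_eventually)
  then have "liminf (\<lambda>L. ereal (g L)) = ereal h"
    by (intro lim_imp_Liminf trivial_limit_sequentially tendsto_ereal)
  then have "ereal h \<le> liminf (\<lambda>L. ereal (g L))" by simp
  also have "\<dots> \<le> liminf (\<lambda>L. ereal (b L / (real L - 1)))"
  proof (intro Liminf_mono)
    show "\<forall>\<^sub>F L in sequentially. ereal (g L) \<le> ereal (b L / (real L - 1))"
      using eventually_gt_at_top[of 1]
    proof eventually_elim
      case (elim L)
      have "a L - c * log 2 (real L + 1) \<le> b L" using le[of L] by linarith
      with elim show ?case by (auto simp: g_def intro!: divide_right_mono)
    qed
  qed
  finally show ?thesis .
qed

subsection \<open>Ranks and symbol counts\<close>

definition count_le :: "nat \<Rightarrow> (nat \<Rightarrow> 'a::linorder) \<Rightarrow> 'a \<Rightarrow> nat" where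
  "count_le L x a = card {i. i < L \<and> x i \<le> a}"

lemma rank_var_Suc: "rank_var (Suc L) x = count_le (Suc L) x (x L)"
proof -
  have "{i \<in> {1..Suc L}. x (i - 1) \<le> x (Suc L - 1)} = Suc ` {i. i < Suc L \<and> x i \<le> x L}"
  proof (intro equalityI subsetI)
    fix i assume "i \<in> {i \<in> {1..Suc L}. x (i - 1) \<le> x (Suc L - 1)}"
    then show "i \<in> Suc ` {i. i < Suc L \<and> x i \<le> x L}"
      by (intro image_eqI[of i Suc "i - 1"]) auto
  qed auto
  then show ?thesis unfolding rank_var_def count_le_def by (simp add: card_image)
qed

lemma rank_block_Suc: "rank_block (Suc L) x = rank_block L x @ [rank_var (Suc L) x]"
  by (simp add: rank_block_def)

lemma count_le_Suc: "count_le (Suc L) x a = count_le L x a + (if x L \<le> a then 1 else 0)"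
proof -
  have "{i. i < Suc L \<and> x i \<le> a} =
      (if x L \<le> a then insert L {i. i < L \<and> x i \<le> a} else {i. i < L \<and> x i \<le> a})"
    by (auto simp: less_Suc_eq)
  then show ?thesis unfolding count_le_def by simp
qed

lemma count_le_Suc_less:
  assumes "b < x L"
  shows "count_le (Suc L) x b < count_le (Suc L) x (x L)"
  unfolding count_le_def
proof (rule psubset_card_mono)
  have "{i. i < Suc L \<and> x i \<le> b} \<subseteq> {i. i < Suc L \<and> x i \<le> x L}"
    by (auto intro: order.trans[OF _ less_imp_le[OF assms]])
  moreover have "L \<notin> {i. i < Suc L \<and> x i \<le> b}" using assms by simp
  ultimately show "{i. i < Suc L \<and> x i \<le> b} \<subset> {i. i < Suc L \<and> x i \<le> x L}"
    by auto
qed simp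

lemma prefix_eq_if_rank_block_count_le_eq:
  assumes "rank_block L x = rank_block L y" and "count_le L x = count_le L y"
  shows "\<forall>i<L. x i = y i"
  using assms
proof (induction L)
  case (Suc L)
  have ranks: "rank_block L x = rank_block L y" "rank_var (Suc L) x = rank_var (Suc L) y"
    using Suc.prems(1) by (simp_all add: rank_block_Suc)
  have last: "x L = y L"
  proof (rule linorder_cases[of "x L" "y L"])
    assume "x L < y L"
    with count_le_Suc_less[of "x L" y L] ranks(2) Suc.prems(2) show ?thesis
      by (simp add: rank_var_Suc)
  next
    assume "y L < x L"
    with count_le_Suc_less[of "y L" x L] ranks(2) Suc.prems(2) show ?thesis
      by (simp add: rank_var_Suc)
  qed
  have "count_le L x = count_le L y"
  proof
    fix a
    show "count_le L x a = count_le L y a"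
      using fun_cong[OF Suc.prems(2), of a] last by (simp add: count_le_Suc)
  qed
  with Suc.IH ranks(1) last show ?case by (auto simp: less_Suc_eq)
qed simp

lemma rank_block_cong:
  assumes "\<And>i. i < L \<Longrightarrow> x i = y i"
  shows "rank_block L x = rank_block L y"
proof -
  have "rank_var n x = rank_var n y" if "n \<le> L" for n
  proof -
    have "x (i - 1) = y (i - 1)" if "i \<in> {1..n}" for i
      using that \<open>n \<le> L\<close> by (intro assms) auto
    then show ?thesis
      unfolding rank_var_def by (intro arg_cong[where f=card] Collect_cong) auto
  qed
  then show ?thesis unfolding rank_block_def by (intro map_cong) auto
qed

lemma count_le_cong:
  assumes "\<And>i. i < L \<Longrightarrow> x i = y i"
  shows "count_le L x = count_le L y"
  unfolding count_le_def using assms by (intro ext arg_cong[where f=card]) auto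

lemma card_range_count_le:
  "card (range (count_le L :: (nat \<Rightarrow> 'a::{finite,linorder}) \<Rightarrow> _)) \<le> Suc L ^ CARD('a)"
proof -
  have "count_le L x a \<le> L" for x :: "nat \<Rightarrow> 'a" and a
    unfolding count_le_def using card_mono[of "{..<L}" "{i. i < L \<and> x i \<le> a}"] by auto
  then have "range (count_le L :: (nat \<Rightarrow> 'a) \<Rightarrow> _) \<subseteq> PiE UNIV (\<lambda>_. {..L})"
    by auto
  then have "card (range (count_le L :: (nat \<Rightarrow> 'a) \<Rightarrow> _)) \<le> card (PiE (UNIV :: 'a set) (\<lambda>_. {..L}))"
    by (intro card_mono) (simp_all add: finite_PiE)
  then show ?thesis by (simp add: card_PiE)
qed

subsection \<open>Block entropies of a stationary source\<close>

lemma block_entropy_subadditive: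
  fixes m :: "(nat \<Rightarrow> 'a::finite) measure"
  assumes m: "shift_invariant_prob m"
  shows "shannon_entropy m (block (L + M)) \<le> shannon_entropy m (block L) + shannon_entropy m (block M)"
proof -
  have P: "prob_space m" and sets: "sets m = Z"
    using m unfolding shift_invariant_prob_def by auto
  have XL: "simple_function m (block L)" and XM: "simple_function m (block M)"
    using simple_function_block[OF sets] by auto
  have XM_shift: "simple_function m (block M \<circ> shift ^^ L)"
    by (rule simple_function_if_prefix_determined[OF sets, of "L + M"])
      (auto simp: funpow_shift intro: block_cong)
  have block_eq: "block (L + M) = (\<lambda>(u, w). u @ w) \<circ> (\<lambda>x. (block L x, (block M \<circ> shift ^^ L) x))"
    by (rule ext) (simp add: block_add)
  have "shannon_entropy m (block (L + M))
      \<le> shannon_entropy m (\<lambda>x. (block L x, (block M \<circ> shift ^^ L) x))"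
    unfolding block_eq by (rule shannon_entropy_comp_le[OF P simple_function_Pair[OF XL XM_shift]])
  also have "\<dots> \<le> shannon_entropy m (block L) + shannon_entropy m (block M \<circ> shift ^^ L)"
    by (rule shannon_entropy_pair_le[OF P XL XM_shift])
  finally show ?thesis
    by (simp add: shannon_entropy_comp_funpow_shift[OF m XM])
qed

lemma block_entropy_div_tendsto_entropy_rate:
  fixes m :: "(nat \<Rightarrow> 'a::finite) measure"
  assumes m: "shift_invariant_prob m"
  shows "(\<lambda>L. shannon_entropy m (block L) / real L) \<longlonglongrightarrow> entropy_rate m"
proof -
  have "prob_space m" using m unfolding shift_invariant_prob_def by auto
  then have "convergent (\<lambda>L. shannon_entropy m (block L) / real L)"
    by (intro subadditive_convergent_div shannon_entropy_nonneg block_entropy_subadditive m)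
  then show ?thesis unfolding entropy_rate_def by (simp add: convergent_LIMSEQ_iff)
qed

lemma block_entropy_le_rank_entropy:
  fixes m :: "(nat \<Rightarrow> 'a::{finite,linorder}) measure"
  assumes P: "prob_space m" and sets: "sets m = Z"
  shows "shannon_entropy m (block L)
    \<le> shannon_entropy m (rank_block L) + real CARD('a) * log 2 (real L + 1)"
proof -
  have space: "space m = UNIV" using space_eq_UNIV_if_sets_Z[OF sets] .
  define RC where "RC = (\<lambda>x :: nat \<Rightarrow> 'a. (rank_block L x, count_le L x))"
  have R: "simple_function m (rank_block L)"
    by (rule simple_function_if_prefix_determined[OF sets, of L]) (rule rank_block_cong)
  have C: "simple_function m (count_le L)"
    by (rule simple_function_if_prefix_determined[OF sets, of L]) (rule count_le_cong)
  have RC: "simple_function m RC"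
    unfolding RC_def by (rule simple_function_Pair[OF R C])
  define decode where "decode p = block L (SOME x. RC x = p)" for p
  have block_eq: "block L = decode \<circ> RC"
  proof
    fix x
    have "RC (SOME y. RC y = RC x) = RC x" using someI[of "\<lambda>y. RC y = RC x" x] by simp
    then have "\<forall>i<L. (SOME y. RC y = RC x) i = x i"
      by (intro prefix_eq_if_rank_block_count_le_eq) (simp_all add: RC_def)
    then have "block L (SOME y. RC y = RC x) = block L x" by (intro block_cong) auto
    then show "block L x = (decode \<circ> RC) x" by (simp add: decode_def)
  qed
  have "shannon_entropy m (block L) \<le> shannon_entropy m RC"
    unfolding block_eq by (rule shannon_entropy_comp_le[OF P RC])
  also have "\<dots> \<le> shannon_entropy m (rank_block L) + shannon_entropy m (count_le L)"
    unfolding RC_def by (rule shannon_entropy_pair_le[OF P R C])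
  also have "shannon_entropy m (count_le L) \<le> log 2 (real (card (count_le L ` space m)))"
    by (rule shannon_entropy_le_log_card[OF P C])
  also have "\<dots> \<le> log 2 (real (Suc L ^ CARD('a)))"
  proof (rule log_mono)
    have "card (count_le L ` space m) \<le> Suc L ^ CARD('a)"
      using card_range_count_le[where 'a='a, of L] by (simp add: space)
    then show "real (card (count_le L ` space m)) \<le> real (Suc L ^ CARD('a))"
      by (rule of_nat_mono)
    show "0 < real (card (count_le L ` space m))"
      using C by (auto simp: simple_function_def space card_gt_0_iff)
  qed simp
  also have "\<dots> = real CARD('a) * log 2 (real L + 1)"
    by (simp add: log_nat_power add.commute)
  finally show ?thesis by simp
qed

theorem theorem4:
  fixes m :: "(nat \<Rightarrow> 'a::{finite,linorder}) measure"
    and ms :: "(nat \<Rightarrow> 'a) \<Rightarrow> (nat \<Rightarrow> 'a) measure"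
  assumes stationary: "shift_invariant_prob m"
    and ms_ergodic: "\<And>s. ergodic_prob (ms s)"
    and ms_shift: "\<And>s. ms (shift s) = ms s"
    and ms_meas: "\<And>C. C \<in> Z \<Longrightarrow> (\<lambda>s. measure (ms s) C) \<in> borel_measurable m"
    and ms_decomp: "\<And>C. C \<in> Z \<Longrightarrow> measure m C = (\<integral>s. measure (ms s) C \<partial>m)"
    and h_integrable: "integrable m (\<lambda>s. entropy_rate (ms s))"
  shows "ereal (entropy_rate m)
           \<le> liminf (\<lambda>L. ereal (shannon_entropy m (rank_block L) / (real L - 1)))"
proof (rule liminf_div_pred_ge_if_le_log_plus)
  show "(\<lambda>L. shannon_entropy m (block L) / real L) \<longlonglongrightarrow> entropy_rate m"
    using stationary by (rule block_entropy_div_tendsto_entropy_rate)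
  show "shannon_entropy m (block L)
      \<le> shannon_entropy m (rank_block L) + real CARD('a) * log 2 (real L + 1)" for L
    using stationary unfolding shift_invariant_prob_def
    by (intro block_entropy_le_rank_entropy) auto
qed

end
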